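(* Let $\mathbb K$ be a field, $R=\mathbb K[x,y,z]$, and let $X=\{P_1,\ldots,P_m\}\subset\mathbb P^2_{\mathbb K}$ be a set of $m$ distinct $\mathbb K$-points, not all collinear. Let $\Lambda_X$ be the collection (with repetitions) of linear forms obtained as follows: for every line $L\subset\mathbb P^2$ containing $s\ge2$ points of $X$, include a linear form defining $L$ exactly $s-1$ times. Let $N=\#\Lambda_X$ (counted with repetitions). Then $N\le\binom m2$ and $$\sqrt{I_{N-(m-1)+1}(\Lambda_X)}=I(X),$$ i.e. $\mathcal V_{N-m+2}(\Lambda_X)=X$. Moreover, every $P_i$ lies on exactly $m-1$ lines of $\Lambda_X$ counted with repetition, while every point $Q\notin X$ which is an intersection point of two distinct lines of $\Lambda_X$ lies on at most $m-2$ lines of $\Lambda_X$ counted with repetition.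
   Context: For a collection $\Lambda=(\ell_1,\ldots,\ell_n)$ of linear forms (possibly some proportional or repeated) and $1\le a\le n$, $I_a(\Lambda)$ is the ideal generated by all products $\ell_{i_1}\cdots\ell_{i_a}$ with $1\le i_1<\cdots<i_a\le n$, and $\mathcal V_a(\Lambda)$ is the projective variety defined by $\sqrt{I_a(\Lambda)}$. $I(X)$ is the (radical) ideal of all polynomials vanishing on $X$. *)

theory Defs
  imports Main "HOL-Library.Poly_Mapping" "HOL-Library.Multiset"
begin

datatype var = VX | VY | VZ

lemma UNIV_var: "(UNIV :: var set) = {VX, VY, VZ}"
  using var.exhaust by blast

instance var :: finite
  by standard (simp add: UNIV_var)

text \<open>Polynomials in K[x,y,z]: finitely supported maps from monomials
  (exponent vectors) to coefficients, with the convolution product.\<close>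
type_synonym 'a mpoly3 = "(var \<Rightarrow>\<^sub>0 nat) \<Rightarrow>\<^sub>0 'a"

text \<open>A (representative of a) point of the projective plane: a vector in K^3.\<close>
type_synonym 'a pt3 = "var \<Rightarrow> 'a"

definition mdeg :: "(var \<Rightarrow>\<^sub>0 nat) \<Rightarrow> nat" where
  "mdeg \<mu> = (\<Sum>v\<in>UNIV. Poly_Mapping.lookup \<mu> v)"

definition homogeneous :: "'a::zero mpoly3 \<Rightarrow> bool" where
  "homogeneous f \<longleftrightarrow> (\<exists>d. \<forall>\<mu>\<in>Poly_Mapping.keys f. mdeg \<mu> = d)"

definition linear_form :: "'a::zero mpoly3 \<Rightarrow> bool" where
  "linear_form l \<longleftrightarrow> l \<noteq> 0 \<and> (\<forall>\<mu>\<in>Poly_Mapping.keys l. mdeg \<mu> = 1)"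

definition eval3 :: "'a::comm_semiring_1 mpoly3 \<Rightarrow> 'a pt3 \<Rightarrow> 'a" where
  "eval3 f P = (\<Sum>\<mu>\<in>Poly_Mapping.keys f. Poly_Mapping.lookup f \<mu> * (\<Prod>v\<in>UNIV. P v ^ Poly_Mapping.lookup \<mu> v))"

definition proj_eq :: "'a::field pt3 \<Rightarrow> 'a pt3 \<Rightarrow> bool" where
  "proj_eq P Q \<longleftrightarrow> (\<exists>c. c \<noteq> 0 \<and> (\<forall>v. Q v = c * P v))"

definition same_line :: "'a::field mpoly3 \<Rightarrow> 'a mpoly3 \<Rightarrow> bool" where
  "same_line l l' \<longleftrightarrow> (\<exists>c. c \<noteq> 0 \<and> l' = Poly_Mapping.map (\<lambda>a. c * a) l)"

definition ideal_gen :: "'a::comm_ring_1 set \<Rightarrow> 'a set" where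
  "ideal_gen S = {\<Sum>g\<in>F. r g * g | F r. finite F \<and> F \<subseteq> S}"

definition radical :: "'a::comm_ring_1 set \<Rightarrow> 'a set" where
  "radical I = {f. \<exists>k::nat. f ^ k \<in> I}"

text \<open>I_a(Lambda): generated by all products of a entries (distinct indices)
  of the collection Lambda, given as a multiset.\<close>
definition I_a :: "nat \<Rightarrow> 'a::comm_ring_1 multiset \<Rightarrow> 'a set" where
  "I_a a \<Lambda> = ideal_gen {prod_mset M | M. M \<subseteq># \<Lambda> \<and> size M = a}"

definition vanishing_ideal :: "'a::field pt3 set \<Rightarrow> 'a mpoly3 set" where
  "vanishing_ideal X = ideal_gen {f. homogeneous f \<and> (\<forall>P\<in>X. eval3 f P = 0)}"

end

theory Submission
  imports Defs "HOL-Computational_Algebra.Polynomial"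
begin

text \<open>
  Through a point \<open>P \<in> X\<close> the members of \<open>\<Lambda>\<close> cut \<open>X - {P}\<close> into disjoint pieces, and a line with
  \<open>s\<close> points of \<open>X\<close> occurs \<open>s - 1\<close> times, so exactly \<open>m - 1\<close> members vanish at \<open>P\<close>. Through a
  point outside \<open>X\<close> the lines cut out disjoint subsets of \<open>X\<close>, each losing one from its
  multiplicity, so if at least two lines meet there at most \<open>m - 2\<close> members vanish there.
  Consequently every product of \<open>N - m + 2\<close> members has a factor vanishing at each \<open>P \<in> X\<close>;
  restricting to the line \<open>t \<mapsto> t P\<close> separates the homogeneous components and gives
  \<open>\<surd>I \<subseteq> I(X)\<close>.

  Conversely, an element lies in the radical of the ideal of \<open>a\<close>-fold products as soon as it
  lies in every ideal missing fewer than \<open>a\<close> members of \<open>\<Lambda>\<close>. Such an ideal contains \<open>m - 1\<close>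
  members, hence, by the bound at points outside \<open>X\<close>, all linear forms vanishing at some point
  of \<open>X\<close>, hence every form vanishing on \<open>X\<close>.
\<close>

definition mon_eval :: "(var \<Rightarrow> 'b::comm_semiring_1) \<Rightarrow> (var \<Rightarrow>\<^sub>0 nat) \<Rightarrow> 'b" where
  "mon_eval P \<mu> = (\<Prod>v\<in>UNIV. P v ^ Poly_Mapping.lookup \<mu> v)"

definition eval_map :: "('a::zero \<Rightarrow> 'b::comm_semiring_1) \<Rightarrow> (var \<Rightarrow> 'b) \<Rightarrow> 'a mpoly3 \<Rightarrow> 'b" where
  "eval_map h P f = (\<Sum>\<mu>\<in>Poly_Mapping.keys f. h (Poly_Mapping.lookup f \<mu>) * mon_eval P \<mu>)"

lemma eval3_eq_eval_map: "eval3 f P = eval_map id P f"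
  by (simp add: eval3_def eval_map_def mon_eval_def)

lemma mon_eval_add: "mon_eval P (\<mu> + \<nu>) = mon_eval P \<mu> * mon_eval P \<nu>"
  by (simp add: mon_eval_def lookup_add power_add prod.distrib)

lemma sum_single_lookup:
  "f = (\<Sum>\<mu>\<in>Poly_Mapping.keys f. Poly_Mapping.single \<mu> (Poly_Mapping.lookup f \<mu>))"
proof (rule poly_mapping_eqI)
  fix k
  have "Poly_Mapping.lookup (\<Sum>\<mu>\<in>Poly_Mapping.keys f. Poly_Mapping.single \<mu> (Poly_Mapping.lookup f \<mu>)) k
      = (\<Sum>\<mu>\<in>Poly_Mapping.keys f. if \<mu> = k then Poly_Mapping.lookup f \<mu> else 0)"
    by (simp add: lookup_sum lookup_single when_def)
  also have "\<dots> = Poly_Mapping.lookup f k"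
    by (simp add: in_keys_iff)
  finally show "Poly_Mapping.lookup f k =
      Poly_Mapping.lookup (\<Sum>\<mu>\<in>Poly_Mapping.keys f. Poly_Mapping.single \<mu> (Poly_Mapping.lookup f \<mu>)) k"
    by simp
qed

context
  fixes h :: "'a::comm_ring_1 \<Rightarrow> 'b::comm_ring_1"
  assumes h_0: "h 0 = 0" and h_add: "\<And>a b. h (a + b) = h a + h b"
    and h_mult: "\<And>a b. h (a * b) = h a * h b" and h_1: "h 1 = 1"
begin

lemma eval_map_superset:
  assumes "finite S" "Poly_Mapping.keys f \<subseteq> S"
  shows "eval_map h P f = (\<Sum>\<mu>\<in>S. h (Poly_Mapping.lookup f \<mu>) * mon_eval P \<mu>)"
  unfolding eval_map_def
  by (rule sum.mono_neutral_left) (use assms h_0 in \<open>auto simp: in_keys_iff\<close>)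

lemma eval_map_add: "eval_map h P (f + g) = eval_map h P f + eval_map h P g"
proof -
  let ?S = "Poly_Mapping.keys f \<union> Poly_Mapping.keys g"
  have "eval_map h P (f + g) = (\<Sum>\<mu>\<in>?S. h (Poly_Mapping.lookup (f + g) \<mu>) * mon_eval P \<mu>)"
    by (rule eval_map_superset) (auto simp: keys_add)
  also have "\<dots> = (\<Sum>\<mu>\<in>?S. h (Poly_Mapping.lookup f \<mu>) * mon_eval P \<mu>)
                  + (\<Sum>\<mu>\<in>?S. h (Poly_Mapping.lookup g \<mu>) * mon_eval P \<mu>)"
    by (simp add: lookup_add h_add distrib_right sum.distrib)
  also have "\<dots> = eval_map h P f + eval_map h P g"
    by (subst (1 2) eval_map_superset[symmetric]) auto
  finally show ?thesis .
qed

lemma eval_map_0 [simp]: "eval_map h P 0 = 0"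
  by (simp add: eval_map_def)

lemma eval_map_sum: "eval_map h P (sum F A) = (\<Sum>x\<in>A. eval_map h P (F x))"
  by (induction A rule: infinite_finite_induct) (auto simp: eval_map_add)

lemma eval_map_single: "eval_map h P (Poly_Mapping.single \<mu> c) = h c * mon_eval P \<mu>"
  by (subst eval_map_superset[of "{\<mu>}"]) auto

lemma eval_map_mult: "eval_map h P (f * g) = eval_map h P f * eval_map h P g"
proof -
  let ?F = "Poly_Mapping.keys f" and ?G = "Poly_Mapping.keys g"
  have "f * g = (\<Sum>\<mu>\<in>?F. Poly_Mapping.single \<mu> (Poly_Mapping.lookup f \<mu>))
              * (\<Sum>\<nu>\<in>?G. Poly_Mapping.single \<nu> (Poly_Mapping.lookup g \<nu>))"
    by (subst (1) sum_single_lookup, subst (1) sum_single_lookup[of g]) (rule refl)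
  also have "\<dots> = (\<Sum>\<mu>\<in>?F. \<Sum>\<nu>\<in>?G. Poly_Mapping.single (\<mu> + \<nu>)
                     (Poly_Mapping.lookup f \<mu> * Poly_Mapping.lookup g \<nu>))"
    by (simp add: sum_distrib_left sum_distrib_right mult_single) (rule sum.swap)
  finally have fg: "f * g = \<dots>" .
  have "eval_map h P (f * g) = (\<Sum>\<mu>\<in>?F. \<Sum>\<nu>\<in>?G.
      (h (Poly_Mapping.lookup f \<mu>) * mon_eval P \<mu>) * (h (Poly_Mapping.lookup g \<nu>) * mon_eval P \<nu>))"
    unfolding fg by (simp add: eval_map_sum eval_map_single h_mult mon_eval_add algebra_simps)
  also have "\<dots> = eval_map h P f * eval_map h P g"
    by (simp add: eval_map_def sum_distrib_left sum_distrib_right) (rule sum.swap)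
  finally show ?thesis .
qed

lemma eval_map_1 [simp]: "eval_map h P 1 = 1"
  using eval_map_single[where \<mu>=0 and c=1] h_1 by (simp add: mon_eval_def)

lemma eval_map_power: "eval_map h P (f ^ n) = eval_map h P f ^ n"
  by (induction n) (simp_all add: eval_map_mult)

lemma eval_map_prod_mset: "eval_map h P (prod_mset M) = prod_mset (image_mset (eval_map h P) M)"
  by (induction M) (simp_all add: eval_map_mult)

end

lemma id_ring_hom:
  "id (0::'a::comm_ring_1) = 0" "\<And>a b::'a. id (a + b) = id a + id b"
  "\<And>a b::'a. id (a * b) = id a * id b" "id (1::'a) = 1"
  by simp_all

lemmas eval3_mult = eval_map_mult[OF id_ring_hom, folded eval3_eq_eval_map]
lemmas eval3_sum = eval_map_sum[OF id_ring_hom, folded eval3_eq_eval_map]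
lemmas eval3_single = eval_map_single[OF id_ring_hom, folded eval3_eq_eval_map, simplified]

lemma eval3_0 [simp]: "eval3 0 P = 0"
  by (simp add: eval3_def)

lemma ideal_gen_0 [simp]: "0 \<in> ideal_gen S"
  unfolding ideal_gen_def by (rule CollectI, rule exI[of _ "{}"]) auto

lemma ideal_gen_base: "s \<in> S \<Longrightarrow> s \<in> ideal_gen S"
  unfolding ideal_gen_def by (rule CollectI, rule exI[of _ "{s}"], rule exI[of _ "\<lambda>_. 1"]) auto

lemma ideal_gen_induct [consumes 1, case_names combination]:
  assumes "x \<in> ideal_gen S"
    and "\<And>F r. finite F \<Longrightarrow> F \<subseteq> S \<Longrightarrow> P (\<Sum>g\<in>F. r g * g)"
  shows "P x"
  using assms unfolding ideal_gen_def by blast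

lemma ideal_gen_add:
  assumes "x \<in> ideal_gen S" "y \<in> ideal_gen S"
  shows "x + y \<in> ideal_gen S"
proof -
  obtain F1 r1 where x: "x = (\<Sum>g\<in>F1. r1 g * g)" "finite F1" "F1 \<subseteq> S"
    using assms(1) unfolding ideal_gen_def by blast
  obtain F2 r2 where y: "y = (\<Sum>g\<in>F2. r2 g * g)" "finite F2" "F2 \<subseteq> S"
    using assms(2) unfolding ideal_gen_def by blast
  define r where "r g = (if g \<in> F1 then r1 g else 0) + (if g \<in> F2 then r2 g else 0)" for g
  have "(\<Sum>g\<in>F1 \<union> F2. r g * g) =
      (\<Sum>g\<in>F1 \<union> F2. if g \<in> F1 then r1 g * g else 0) + (\<Sum>g\<in>F1 \<union> F2. if g \<in> F2 then r2 g * g else 0)"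
    unfolding sum.distrib[symmetric] by (rule sum.cong) (auto simp: r_def distrib_right)
  also have "\<dots> = x + y"
    unfolding sum.If_cases[OF finite_UnI[OF x(2) y(2)]] using x y by (simp add: Int_absorb1)
  finally show ?thesis unfolding ideal_gen_def using x y
    by (intro CollectI exI[of _ "F1 \<union> F2"] exI[of _ r]) auto
qed

lemma ideal_gen_mult_left: "x \<in> ideal_gen S \<Longrightarrow> r * x \<in> ideal_gen S"
proof -
  assume "x \<in> ideal_gen S"
  then obtain F r1 where x: "x = (\<Sum>g\<in>F. r1 g * g)" "finite F" "F \<subseteq> S"
    unfolding ideal_gen_def by blast
  have "r * x = (\<Sum>g\<in>F. (r * r1 g) * g)" by (simp add: x sum_distrib_left mult.assoc)
  then show ?thesis unfolding ideal_gen_def using x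
    by (intro CollectI exI[of _ F] exI[of _ "\<lambda>g. r * r1 g"]) auto
qed

lemma ideal_gen_mult_right: "x \<in> ideal_gen S \<Longrightarrow> x * r \<in> ideal_gen S"
  using ideal_gen_mult_left[of x S r] by (simp add: mult.commute)

lemma ideal_gen_sum: "(\<And>i. i \<in> A \<Longrightarrow> f i \<in> ideal_gen S) \<Longrightarrow> sum f A \<in> ideal_gen S"
  by (induction A rule: infinite_finite_induct) (auto intro: ideal_gen_add)

lemma ideal_gen_mono: "S \<subseteq> T \<Longrightarrow> ideal_gen S \<subseteq> ideal_gen T"
  unfolding ideal_gen_def by blast

lemma mult_in_ideal_gen:
  assumes "x \<in> ideal_gen S1" "y \<in> ideal_gen S2"
    and "\<And>a b. a \<in> S1 \<Longrightarrow> b \<in> S2 \<Longrightarrow> a * b \<in> ideal_gen T"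
  shows "x * y \<in> ideal_gen T"
  using assms(1)
proof (induction rule: ideal_gen_induct)
  case (combination F1 r1)
  from assms(2) show ?case
  proof (induction rule: ideal_gen_induct)
    case (combination F2 r2)
    have "(\<Sum>a\<in>F1. r1 a * a) * (\<Sum>b\<in>F2. r2 b * b) = (\<Sum>a\<in>F1. \<Sum>b\<in>F2. (r1 a * r2 b) * (a * b))"
      unfolding sum_product by (intro sum.cong refl) (simp add: mult_ac)
    also have "\<dots> \<in> ideal_gen T"
      using \<open>F1 \<subseteq> S1\<close> \<open>F2 \<subseteq> S2\<close> by (intro ideal_gen_sum ideal_gen_mult_left assms(3)) auto
    finally show ?case .
  qed
qed

lemma radical_ideal_gen_add:
  assumes "x \<in> radical (ideal_gen S)" "y \<in> radical (ideal_gen S)"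
  shows "x + y \<in> radical (ideal_gen S)"
proof -
  obtain n where n: "x ^ n \<in> ideal_gen S" using assms(1) unfolding radical_def by blast
  obtain k where k: "y ^ k \<in> ideal_gen S" using assms(2) unfolding radical_def by blast
  have "(x + y) ^ (n + k) = (\<Sum>i\<le>n + k. of_nat (n + k choose i) * x ^ i * y ^ (n + k - i))"
    by (rule binomial_ring)
  also have "\<dots> \<in> ideal_gen S"
  proof (rule ideal_gen_sum)
    fix i
    show "of_nat (n + k choose i) * x ^ i * y ^ (n + k - i) \<in> ideal_gen S"
    proof (cases "n \<le> i")
      case True
      then have "x ^ i = x ^ n * x ^ (i - n)" by (simp add: power_add[symmetric])
      then show ?thesis using n by (simp add: ideal_gen_mult_left ideal_gen_mult_right mult.assoc)
    next
      case False
      then have "n + k - i = k + (n - i)" by simp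
      then have "y ^ (n + k - i) = y ^ k * y ^ (n - i)" by (simp add: power_add)
      then show ?thesis using k by (simp add: ideal_gen_mult_left ideal_gen_mult_right mult.assoc)
    qed
  qed
  finally show ?thesis unfolding radical_def by blast
qed

lemma radical_ideal_gen_mult_left: "x \<in> radical (ideal_gen S) \<Longrightarrow> r * x \<in> radical (ideal_gen S)"
  unfolding radical_def by (auto simp: power_mult_distrib intro: ideal_gen_mult_left)

lemma ideal_gen_subset_radical:
  assumes "T \<subseteq> radical (ideal_gen S)"
  shows "ideal_gen T \<subseteq> radical (ideal_gen S)"
proof
  fix x assume "x \<in> ideal_gen T"
  then show "x \<in> radical (ideal_gen S)"
  proof (induction rule: ideal_gen_induct)
    case (combination F r)
    show ?case
      using \<open>finite F\<close> \<open>F \<subseteq> T\<close>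
    proof (induction F rule: finite_induct)
      case empty
      show ?case unfolding radical_def by (auto intro!: exI[of _ 1])
    qed (use assms in \<open>auto intro: radical_ideal_gen_add radical_ideal_gen_mult_left\<close>)
  qed
qed

section \<open>A radical criterion for ideals of products\<close>

definition products :: "nat \<Rightarrow> 'a::comm_ring_1 multiset \<Rightarrow> 'a set" where
  "products a \<Lambda> = {prod_mset M | M. M \<subseteq># \<Lambda> \<and> size M = a}"

lemma I_a_eq_ideal_gen_products: "I_a a \<Lambda> = ideal_gen (products a \<Lambda>)"
  by (simp add: I_a_def products_def)

lemma products_0: "1 \<in> products 0 \<Lambda>"
  unfolding products_def by (rule CollectI, rule exI[of _ "{#}"]) simp

lemma products_mono: "products a \<Lambda> \<subseteq> products a (add_mset l \<Lambda>)"
proof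
  fix y assume "y \<in> products a \<Lambda>"
  then obtain M where "y = prod_mset M" "M \<subseteq># \<Lambda>" "size M = a"
    unfolding products_def by blast
  moreover have "\<Lambda> \<subseteq># add_mset l \<Lambda>" by simp
  ultimately show "y \<in> products a (add_mset l \<Lambda>)"
    unfolding products_def by (blast intro: subset_mset.order_trans)
qed

lemma products_add_mset:
  assumes "y \<in> products a \<Lambda>"
  shows "l * y \<in> products (Suc a) (add_mset l \<Lambda>)"
proof -
  obtain M where "y = prod_mset M" "M \<subseteq># \<Lambda>" "size M = a"
    using assms unfolding products_def by blast
  then show ?thesis unfolding products_def by (intro CollectI exI[of _ "add_mset l M"]) auto
qed

text \<open>Splitting off one member \<open>l\<close> of \<open>\<Lambda>\<close>, the induction hypotheses for \<open>(a, M \<union> {l})\<close> and for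
  \<open>(a - 1, M)\<close> give powers \<open>f\<^sup>i\<close> and \<open>f\<^sup>j\<close>; their product lies in the ideal because \<open>l\<close> times an
  \<open>(a - 1)\<close>-fold product of \<open>\<Lambda>\<close> is an \<open>a\<close>-fold product of \<open>add_mset l \<Lambda>\<close>.\<close>
lemma in_radical_products_if_in_covering_ideals:
  fixes f :: "'a::comm_ring_1"
  assumes "\<And>T. M \<subseteq> T \<Longrightarrow> size (filter_mset (\<lambda>l. l \<notin> ideal_gen T) \<Lambda>) < a \<Longrightarrow> f \<in> ideal_gen T"
  shows "f \<in> radical (ideal_gen (products a \<Lambda> \<union> M))"
  using assms
proof (induction \<Lambda> arbitrary: a M)
  case empty
  show ?case
  proof (cases a)
    case 0
    then have "f ^ 0 \<in> ideal_gen (products a {#} \<union> M)" using products_0 by (auto intro: ideal_gen_base)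
    then show ?thesis unfolding radical_def by blast
  next
    case (Suc b)
    then have "f ^ 1 \<in> ideal_gen (products a {#} \<union> M)"
      using empty[of M] ideal_gen_mono[of M "products a {#} \<union> M"] by auto
    then show ?thesis unfolding radical_def by blast
  qed
next
  case (add l \<Lambda> a M)
  show ?case
  proof (cases a)
    case 0
    then have "f ^ 0 \<in> ideal_gen (products a (add_mset l \<Lambda>) \<union> M)"
      using products_0 by (auto intro: ideal_gen_base)
    then show ?thesis unfolding radical_def by blast
  next
    case (Suc b)
    have "f \<in> radical (ideal_gen (products a \<Lambda> \<union> (M \<union> {l})))"
    proof (rule add.IH)
      fix T assume "M \<union> {l} \<subseteq> T" "size (filter_mset (\<lambda>l. l \<notin> ideal_gen T) \<Lambda>) < a"
      moreover have "l \<in> ideal_gen T" using \<open>M \<union> {l} \<subseteq> T\<close> by (auto intro: ideal_gen_base)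
      ultimately show "f \<in> ideal_gen T" by (intro add.prems) auto
    qed
    then obtain i where i: "f ^ i \<in> ideal_gen (products a \<Lambda> \<union> (M \<union> {l}))"
      unfolding radical_def by blast
    have "f \<in> radical (ideal_gen (products b \<Lambda> \<union> M))"
    proof (rule add.IH)
      fix T assume "M \<subseteq> T" "size (filter_mset (\<lambda>l. l \<notin> ideal_gen T) \<Lambda>) < b"
      then show "f \<in> ideal_gen T" using Suc by (intro add.prems) auto
    qed
    then obtain j where j: "f ^ j \<in> ideal_gen (products b \<Lambda> \<union> M)"
      unfolding radical_def by blast
    let ?T = "products a (add_mset l \<Lambda>) \<union> M"
    have "f ^ i * f ^ j \<in> ideal_gen ?T"
    proof (rule mult_in_ideal_gen[OF i j])
      fix x y assume x: "x \<in> products a \<Lambda> \<union> (M \<union> {l})" and y: "y \<in> products b \<Lambda> \<union> M"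
      show "x * y \<in> ideal_gen ?T"
      proof (cases "x = l \<and> y \<notin> M")
        case True
        then have "x * y \<in> ?T" using y products_add_mset Suc by blast
        then show ?thesis by (rule ideal_gen_base)
      next
        case False
        then have "x \<in> ?T \<or> y \<in> ?T" using x y products_mono by blast
        then show ?thesis by (auto intro: ideal_gen_base ideal_gen_mult_left ideal_gen_mult_right)
      qed
    qed
    then show ?thesis unfolding radical_def power_add[symmetric] by blast
  qed
qed

declare One_nat_def [simp del]

lemma sum_UNIV_var: "(\<Sum>v\<in>UNIV. f v) = f VX + f VY + f VZ"
  by (simp add: UNIV_var add.assoc)

lemma prod_UNIV_var: "(\<Prod>v\<in>UNIV. f v) = f VX * f VY * f VZ"
  by (simp add: UNIV_var mult.assoc)

lemma fun3_eq_iff: "f = g \<longleftrightarrow> f VX = g VX \<and> f VY = g VY \<and> f VZ = g VZ"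
  by (metis (full_types) ext var.exhaust)

lemma fun3_eq_0_iff: "f = (\<lambda>_. 0) \<longleftrightarrow> f VX = 0 \<and> f VY = 0 \<and> f VZ = 0"
  by (simp add: fun3_eq_iff)

abbreviation mvar :: "var \<Rightarrow> 'a::comm_ring_1 mpoly3" where
  "mvar v \<equiv> Poly_Mapping.single (Poly_Mapping.single v 1) 1"

definition mconst :: "'a::comm_ring_1 \<Rightarrow> 'a mpoly3" where
  "mconst c = Poly_Mapping.single 0 c"

definition lin_form :: "(var \<Rightarrow> 'a::comm_ring_1) \<Rightarrow> 'a mpoly3" where
  "lin_form c = (\<Sum>v\<in>UNIV. Poly_Mapping.single (Poly_Mapping.single v 1) (c v))"

definition lin_coeffs :: "'a::comm_ring_1 mpoly3 \<Rightarrow> var \<Rightarrow> 'a" where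
  "lin_coeffs l v = Poly_Mapping.lookup l (Poly_Mapping.single v 1)"

definition dot :: "(var \<Rightarrow> 'a::comm_ring_1) \<Rightarrow> (var \<Rightarrow> 'a) \<Rightarrow> 'a" where
  "dot a P = (\<Sum>v\<in>UNIV. a v * P v)"

lemma dot3: "dot a P = a VX * P VX + a VY * P VY + a VZ * P VZ"
  by (simp add: dot_def sum_UNIV_var)

lemma mconst_0 [simp]: "mconst 0 = 0"
  by (simp add: mconst_def)

lemma mconst_1 [simp]: "mconst 1 = 1"
  by (simp add: mconst_def)

lemma mconst_mult: "mconst a * mconst b = mconst (a * b)"
  by (simp add: mconst_def mult_single)

lemma mconst_power: "mconst a ^ n = mconst (a ^ n)"
  by (induction n) (simp_all add: mconst_mult)

lemma mconst_sum: "mconst (sum f A) = (\<Sum>x\<in>A. mconst (f x))"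
  by (induction A rule: infinite_finite_induct) (simp_all add: mconst_def single_add)

lemma mconst_mult_single: "mconst a * Poly_Mapping.single \<mu> b = Poly_Mapping.single \<mu> (a * b)"
  by (simp add: mconst_def mult_single)

lemma mconst_mult_eq_map: "mconst c * f = Poly_Mapping.map (\<lambda>a. c * a) f"
  using mult_map_scale_conv_mult[of c f] by (simp add: mconst_def)

lemma single_var_eq_iff: "Poly_Mapping.single v (1::nat) = Poly_Mapping.single w 1 \<longleftrightarrow> v = w"
proof
  assume "Poly_Mapping.single v (1::nat) = Poly_Mapping.single w 1"
  then have "Poly_Mapping.lookup (Poly_Mapping.single v (1::nat)) v = Poly_Mapping.lookup (Poly_Mapping.single w 1) v"
    by simp
  then show "v = w" by (auto simp: lookup_single when_def split: if_splits)
qed simp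

lemma mdeg_single_var: "mdeg (Poly_Mapping.single v 1) = 1"
  by (simp add: mdeg_def lookup_single when_def)

lemma mdeg_eq_1_imp_single_var:
  assumes "mdeg \<mu> = 1"
  shows "\<exists>v. \<mu> = Poly_Mapping.single v 1"
proof -
  let ?l = "Poly_Mapping.lookup \<mu>"
  have sum: "?l VX + ?l VY + ?l VZ = 1" using assms by (simp add: mdeg_def sum_UNIV_var)
  have "\<mu> = Poly_Mapping.single v 1" if "?l v = 1" for v
  proof (rule poly_mapping_eqI)
    fix w
    show "?l w = Poly_Mapping.lookup (Poly_Mapping.single v 1) w"
      using sum that by (cases v; cases w) (auto simp: lookup_single)
  qed
  moreover have "?l VX = 1 \<or> ?l VY = 1 \<or> ?l VZ = 1" using sum by arith
  ultimately show ?thesis by blast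
qed

lemma mon_eval_single_var: "mon_eval P (Poly_Mapping.single v 1) = P v"
  by (cases v) (simp_all add: mon_eval_def prod_UNIV_var lookup_single when_def)

lemma eval3_mconst: "eval3 (mconst c) P = c"
  by (simp add: mconst_def eval3_single mon_eval_def)

lemma eval3_lin_form: "eval3 (lin_form c) P = dot c P"
  by (simp add: lin_form_def eval3_sum eval3_single mon_eval_single_var dot_def)

lemma lookup_map_mult:
  "Poly_Mapping.lookup (Poly_Mapping.map (\<lambda>a. (c::'a::comm_ring_1) * a) f) \<mu> = c * Poly_Mapping.lookup f \<mu>"
  by (simp add: map.rep_eq when_def)

lemma eval3_map_mult: "eval3 (Poly_Mapping.map (\<lambda>a. (c::'a::comm_ring_1) * a) l) P = c * eval3 l P"
  unfolding mconst_mult_eq_map[symmetric] by (simp add: eval3_mult eval3_mconst)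

lemma lookup_lin_form_single_var: "Poly_Mapping.lookup (lin_form c) (Poly_Mapping.single v 1) = c v"
  by (cases v) (simp_all add: lin_form_def sum_UNIV_var lookup_add lookup_single when_def single_var_eq_iff)

lemma lookup_lin_form_other:
  "\<forall>v. \<mu> \<noteq> Poly_Mapping.single v 1 \<Longrightarrow> Poly_Mapping.lookup (lin_form c) \<mu> = 0"
  by (auto simp: lin_form_def lookup_sum lookup_single when_def intro!: sum.neutral)

lemma lin_coeffs_lin_form [simp]: "lin_coeffs (lin_form c) = c"
  by (simp add: lin_coeffs_def lookup_lin_form_single_var fun_eq_iff)

lemma linear_form_keys: "linear_form l \<Longrightarrow> \<mu> \<in> Poly_Mapping.keys l \<Longrightarrow> \<exists>v. \<mu> = Poly_Mapping.single v 1"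
  unfolding linear_form_def using mdeg_eq_1_imp_single_var by blast

lemma lin_form_lin_coeffs:
  assumes "linear_form l"
  shows "lin_form (lin_coeffs l) = l"
proof (rule poly_mapping_eqI)
  fix \<mu>
  show "Poly_Mapping.lookup (lin_form (lin_coeffs l)) \<mu> = Poly_Mapping.lookup l \<mu>"
  proof (cases "\<exists>v. \<mu> = Poly_Mapping.single v 1")
    case True
    then show ?thesis by (auto simp: lookup_lin_form_single_var lin_coeffs_def)
  next
    case False
    then show ?thesis
      using linear_form_keys[OF assms] by (auto simp: lookup_lin_form_other in_keys_iff)
  qed
qed

lemma lin_form_eq_0_iff: "lin_form c = 0 \<longleftrightarrow> c = (\<lambda>_. 0)"
proof
  assume "lin_form c = 0"
  then show "c = (\<lambda>_. 0)" using lin_coeffs_lin_form[of c] by (auto simp: lin_coeffs_def)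
qed (simp add: lin_form_def)

lemma linear_form_lin_form:
  assumes "c \<noteq> (\<lambda>_. 0)"
  shows "linear_form (lin_form c)"
proof -
  have "mdeg \<mu> = 1" if "\<mu> \<in> Poly_Mapping.keys (lin_form c)" for \<mu>
    using that lookup_lin_form_other[of \<mu> c] mdeg_single_var by (auto simp: in_keys_iff)
  then show ?thesis using assms lin_form_eq_0_iff unfolding linear_form_def by blast
qed

lemma lin_coeffs_nonzero: "linear_form l \<Longrightarrow> lin_coeffs l \<noteq> (\<lambda>_. 0)"
  using lin_form_lin_coeffs[of l] lin_form_eq_0_iff[of "lin_coeffs l"] unfolding linear_form_def by auto

lemma eval3_linear_form: "linear_form l \<Longrightarrow> eval3 l P = dot (lin_coeffs l) P"
  by (metis lin_form_lin_coeffs eval3_lin_form)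

lemma lin_form_add: "lin_form (\<lambda>v. a v + b v) = lin_form a + lin_form b"
  by (simp add: lin_form_def single_add sum.distrib)

lemma lin_form_scale: "lin_form (\<lambda>v. c * a v) = mconst c * lin_form a"
  by (simp add: lin_form_def sum_distrib_left mconst_mult_single)

lemma same_line_iff_proportional_coeffs:
  assumes "linear_form l" "linear_form l'"
  shows "same_line l l' \<longleftrightarrow> (\<exists>k. k \<noteq> 0 \<and> (\<forall>v. lin_coeffs l' v = k * lin_coeffs l v))"
proof
  assume "same_line l l'"
  then show "\<exists>k. k \<noteq> 0 \<and> (\<forall>v. lin_coeffs l' v = k * lin_coeffs l v)"
    unfolding same_line_def lin_coeffs_def by (auto simp: lookup_map_mult)
next
  assume "\<exists>k. k \<noteq> 0 \<and> (\<forall>v. lin_coeffs l' v = k * lin_coeffs l v)"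
  then obtain k where k: "k \<noteq> 0" "lin_coeffs l' = (\<lambda>v. k * lin_coeffs l v)" by auto
  have "l' = lin_form (\<lambda>v. k * lin_coeffs l v)" using lin_form_lin_coeffs[OF assms(2)] k(2) by simp
  also have "\<dots> = mconst k * l" by (simp add: lin_form_scale lin_form_lin_coeffs assms(1))
  finally have "l' = mconst k * l" .
  then show "same_line l l'"
    unfolding same_line_def mconst_mult_eq_map using k(1) by blast
qed

lemma same_line_refl: "same_line l l"
  unfolding same_line_def by (rule exI[of _ 1]) (simp add: poly_mapping_eqI lookup_map_mult)

definition cross :: "(var \<Rightarrow> 'a::comm_ring_1) \<Rightarrow> (var \<Rightarrow> 'a) \<Rightarrow> (var \<Rightarrow> 'a)" where
  "cross a b = (\<lambda>v. case v of VX \<Rightarrow> a VY * b VZ - a VZ * b VY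
                          | VY \<Rightarrow> a VZ * b VX - a VX * b VZ
                          | VZ \<Rightarrow> a VX * b VY - a VY * b VX)"

lemma cross_simps [simp]:
  "cross a b VX = a VY * b VZ - a VZ * b VY"
  "cross a b VY = a VZ * b VX - a VX * b VZ"
  "cross a b VZ = a VX * b VY - a VY * b VX"
  by (simp_all add: cross_def)

lemma dot_cross_left: "dot a (cross a b) = 0"
  by (simp add: dot3 algebra_simps)

lemma dot_cross_right: "dot b (cross a b) = 0"
  by (simp add: dot3 algebra_simps)

lemma dot_commute: "dot a b = dot b a"
  by (simp add: dot3 algebra_simps)

lemma dot_scale_right: "dot a (\<lambda>v. c * P v) = c * dot a P"
  by (simp add: dot3 algebra_simps)

lemma cross_cross: "cross c (cross P Q) = (\<lambda>v. P v * dot c Q - Q v * dot c P)"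
  by (simp add: fun3_eq_iff dot3 algebra_simps)

lemma cross_eq_0_commute: "cross a b = (\<lambda>_. 0) \<longleftrightarrow> cross b a = (\<lambda>_. 0)"
  by (simp add: fun3_eq_0_iff algebra_simps) (auto simp: algebra_simps)

lemma cramer_rule3:
  "dot c (cross a b) * e v = dot c (cross e b) * a v + dot c (cross a e) * b v + dot e (cross a b) * c v"
  by (cases v) (simp_all add: dot3 algebra_simps)

lemma cross_eq_0_imp_multiple:
  fixes a b :: "var \<Rightarrow> 'a::field"
  assumes "cross a b = (\<lambda>_. 0)" "a \<noteq> (\<lambda>_. 0)"
  shows "\<exists>k. \<forall>v. b v = k * a v"
proof -
  have c: "a VY * b VZ = a VZ * b VY" "a VZ * b VX = a VX * b VZ" "a VX * b VY = a VY * b VX"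
    using assms(1) by (simp_all add: fun3_eq_0_iff)
  obtain u where "a u \<noteq> 0" using assms(2) by auto
  then have "b v = b u / a u * a v" for v
    using c by (cases u; cases v) (simp_all add: field_simps)
  then show ?thesis by blast
qed

lemma proj_eq_if_cross_eq_0:
  assumes "P \<noteq> (\<lambda>_. 0)" "Q \<noteq> (\<lambda>_. 0)" "cross P Q = (\<lambda>_. 0)"
  shows "proj_eq P Q"
proof -
  obtain k where k: "\<forall>v. Q v = k * P v" using cross_eq_0_imp_multiple assms by blast
  then have "k \<noteq> 0" using assms(2) by auto
  then show ?thesis unfolding proj_eq_def using k by blast
qed

lemma orthogonal_to_two_points_proportional:
  fixes a b P Q :: "var \<Rightarrow> 'a::field"
  assumes "cross P Q \<noteq> (\<lambda>_. 0)" and "a \<noteq> (\<lambda>_. 0)"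
    and "dot a P = 0" "dot a Q = 0" "dot b P = 0" "dot b Q = 0"
  shows "\<exists>k. \<forall>v. b v = k * a v"
proof -
  have "cross a (cross P Q) = (\<lambda>_. 0)" "cross b (cross P Q) = (\<lambda>_. 0)"
    using assms by (simp_all add: cross_cross)
  then obtain \<alpha> \<beta> where \<alpha>: "\<forall>v. a v = \<alpha> * cross P Q v" and \<beta>: "\<forall>v. b v = \<beta> * cross P Q v"
    using cross_eq_0_imp_multiple[OF _ assms(1)] cross_eq_0_commute by metis
  have "\<alpha> \<noteq> 0" using assms(2) \<alpha> by auto
  then have "\<forall>v. b v = (\<beta> / \<alpha>) * a v" using \<alpha> \<beta> by auto
  then show ?thesis by blast
qed

lemma orthogonal_to_cross_in_span:
  fixes a b e :: "var \<Rightarrow> 'a::field"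
  assumes "cross a b \<noteq> (\<lambda>_. 0)" "dot e (cross a b) = 0"
  shows "\<exists>\<alpha> \<beta>. e = (\<lambda>v. \<alpha> * a v + \<beta> * b v)"
proof -
  obtain i where i: "cross a b i \<noteq> 0" using assms(1) by auto
  define u where "u = (\<lambda>v. if v = i then (1::'a) else 0)"
  have du: "dot u (cross a b) = cross a b i" by (cases i) (simp_all add: u_def dot3)
  let ?D = "cross a b i"
  have "e v = (dot u (cross e b) / ?D) * a v + (dot u (cross a e) / ?D) * b v" for v
    using cramer_rule3[of u a b e v] assms(2) du i by (simp add: field_simps)
  then show ?thesis by blast
qed

lemma in_span_if_det_nonzero:
  fixes a b c e :: "var \<Rightarrow> 'a::field"
  assumes "dot c (cross a b) \<noteq> 0"
  shows "\<exists>\<alpha> \<beta> \<gamma>. e = (\<lambda>v. \<alpha> * a v + \<beta> * b v + \<gamma> * c v)"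
proof -
  let ?D = "dot c (cross a b)"
  have "e v = (dot c (cross e b) / ?D) * a v + (dot c (cross a e) / ?D) * b v + (dot e (cross a b) / ?D) * c v" for v
    using cramer_rule3[of c a b e v] assms by (simp add: field_simps)
  then show ?thesis by blast
qed

lemma cross_lin_coeffs_nonzero:
  fixes l1 l2 :: "'a::field mpoly3"
  assumes "linear_form l1" "linear_form l2" "\<not> same_line l1 l2"
  shows "cross (lin_coeffs l1) (lin_coeffs l2) \<noteq> (\<lambda>_. 0)"
proof
  assume "cross (lin_coeffs l1) (lin_coeffs l2) = (\<lambda>_. 0)"
  then obtain k where k: "\<forall>v. lin_coeffs l2 v = k * lin_coeffs l1 v"
    using cross_eq_0_imp_multiple lin_coeffs_nonzero[OF assms(1)] by blast
  then have "k \<noteq> 0" using lin_coeffs_nonzero[OF assms(2)] by auto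
  then show False using k assms same_line_iff_proportional_coeffs by blast
qed

lemma exists_orthogonal_nonzero: "\<exists>c. c \<noteq> (\<lambda>_. 0) \<and> dot c (P :: 'a::field pt3) = 0"
proof (cases "P VX = 0")
  case True
  then show ?thesis by (intro exI[of _ "\<lambda>v. if v = VX then 1 else 0"]) (auto simp: fun_eq_iff dot3)
next
  case False
  then show ?thesis
    by (intro exI[of _ "\<lambda>v. case v of VX \<Rightarrow> P VY | VY \<Rightarrow> - P VX | VZ \<Rightarrow> 0"])
      (auto simp: fun3_eq_0_iff dot3 algebra_simps)
qed


section \<open>Homogeneous components and restriction to lines through the origin\<close>

definition hom_component :: "nat \<Rightarrow> 'a::comm_ring_1 mpoly3 \<Rightarrow> 'a mpoly3" where
  "hom_component d f = Abs_poly_mapping (\<lambda>\<mu>. if mdeg \<mu> = d then Poly_Mapping.lookup f \<mu> else 0)"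

lemma lookup_hom_component:
  "Poly_Mapping.lookup (hom_component d f) \<mu> = (if mdeg \<mu> = d then Poly_Mapping.lookup f \<mu> else 0)"
proof -
  have "finite {\<mu>. (if mdeg \<mu> = d then Poly_Mapping.lookup f \<mu> else 0) \<noteq> 0}"
    by (rule finite_subset[of _ "Poly_Mapping.keys f"]) (auto simp: in_keys_iff)
  then show ?thesis unfolding hom_component_def by simp
qed

lemma keys_hom_component: "Poly_Mapping.keys (hom_component d f) = {\<mu>\<in>Poly_Mapping.keys f. mdeg \<mu> = d}"
  by (auto simp: in_keys_iff lookup_hom_component split: if_splits)

lemma homogeneous_hom_component: "homogeneous (hom_component d f)"
  unfolding homogeneous_def by (auto simp: keys_hom_component)

lemma sum_hom_components: "f = (\<Sum>d\<in>mdeg ` Poly_Mapping.keys f. hom_component d f)"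
proof (rule poly_mapping_eqI)
  fix \<mu>
  have "Poly_Mapping.lookup (\<Sum>d\<in>mdeg ` Poly_Mapping.keys f. hom_component d f) \<mu>
     = (\<Sum>d\<in>mdeg ` Poly_Mapping.keys f. if mdeg \<mu> = d then Poly_Mapping.lookup f \<mu> else 0)"
    by (simp add: lookup_sum lookup_hom_component)
  also have "\<dots> = Poly_Mapping.lookup f \<mu>"
    by (subst sum.delta') (auto simp: in_keys_iff)
  finally show "Poly_Mapping.lookup f \<mu> = Poly_Mapping.lookup (\<Sum>d\<in>mdeg ` Poly_Mapping.keys f. hom_component d f) \<mu>"
    by simp
qed

lemma hom_component_of_homogeneous:
  assumes "\<forall>\<mu>\<in>Poly_Mapping.keys g. mdeg \<mu> = d"
  shows "hom_component d' g = (if d' = d then g else 0)"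
  by (rule poly_mapping_eqI) (use assms in \<open>auto simp: lookup_hom_component in_keys_iff\<close>)

text \<open>The univariate polynomial \<open>t \<mapsto> f(t P)\<close>.\<close>
definition eval_ray :: "(var \<Rightarrow> 'a::comm_ring_1) \<Rightarrow> 'a mpoly3 \<Rightarrow> 'a poly" where
  "eval_ray P = eval_map (\<lambda>c. [:c:]) (\<lambda>v. [:0, P v:])"

lemma pCons_const_ring_hom:
  "[:0::'a::comm_ring_1:] = 0" "\<And>a b::'a. [:a + b:] = [:a:] + [:b:]"
  "\<And>a b::'a. [:a * b:] = [:a:] * [:b:]" "[:1::'a:] = 1"
  by (simp_all add: one_pCons)

lemma eval_ray_mult: "eval_ray P (f * g) = eval_ray P f * eval_ray P g"
  unfolding eval_ray_def by (rule eval_map_mult[OF pCons_const_ring_hom])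

lemma eval_ray_sum: "eval_ray P (sum F A) = (\<Sum>x\<in>A. eval_ray P (F x))"
  unfolding eval_ray_def by (rule eval_map_sum[OF pCons_const_ring_hom])

lemma eval_ray_power: "eval_ray P (f ^ n) = eval_ray P f ^ n"
  unfolding eval_ray_def by (rule eval_map_power[OF pCons_const_ring_hom])

lemma eval_ray_prod_mset: "eval_ray P (prod_mset M) = prod_mset (image_mset (eval_ray P) M)"
  unfolding eval_ray_def by (rule eval_map_prod_mset[OF pCons_const_ring_hom])

lemma coeff_eval_ray: "coeff (eval_ray P f) d = eval3 (hom_component d f) P"
proof -
  have "[:0, c:] = monom c 1" for c :: 'a
    by (simp add: monom_Suc monom_0 One_nat_def)
  then have mon: "mon_eval (\<lambda>v. [:0, P v:]) \<mu> = monom (mon_eval P \<mu>) (mdeg \<mu>)" for \<mu>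
    by (simp add: mon_eval_def prod_UNIV_var mdeg_def sum_UNIV_var monom_power mult_monom)
  have "coeff (eval_ray P f) d =
      (\<Sum>\<mu>\<in>Poly_Mapping.keys f. if mdeg \<mu> = d then Poly_Mapping.lookup f \<mu> * mon_eval P \<mu> else 0)"
    by (simp add: eval_ray_def eval_map_def mon smult_monom coeff_sum)
  also have "\<dots> = (\<Sum>\<mu>\<in>{\<mu>\<in>Poly_Mapping.keys f. mdeg \<mu> = d}. Poly_Mapping.lookup f \<mu> * mon_eval P \<mu>)"
    by (rule sum.inter_filter[symmetric]) simp
  also have "\<dots> = eval3 (hom_component d f) P"
    by (simp add: eval3_eq_eval_map eval_map_def keys_hom_component lookup_hom_component)
  finally show ?thesis .
qed

lemma eval_ray_homogeneous_eq_0: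
  assumes "\<forall>\<mu>\<in>Poly_Mapping.keys g. mdeg \<mu> = d" "eval3 g P = 0"
  shows "eval_ray P g = 0"
  by (rule poly_eqI) (simp add: coeff_eval_ray hom_component_of_homogeneous[OF assms(1)] assms(2))

lemma eval_ray_ideal_gen_eq_0:
  assumes "x \<in> ideal_gen S" "\<forall>s\<in>S. eval_ray P s = 0"
  shows "eval_ray P x = 0"
  using assms(1)
proof (induction rule: ideal_gen_induct)
  case (combination F r)
  then show ?case using assms(2) by (auto simp: eval_ray_sum eval_ray_mult intro!: sum.neutral)
qed

lemma in_vanishing_ideal_if_eval_ray_eq_0:
  fixes f :: "'a::field mpoly3"
  assumes "\<forall>P\<in>X. eval_ray P f = 0"
  shows "f \<in> vanishing_ideal X"
proof -
  have "eval3 (hom_component d f) P = 0" if "P \<in> X" for d P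
    using assms that coeff_eval_ray[of P f d] by simp
  then have "hom_component d f \<in> vanishing_ideal X" for d
    unfolding vanishing_ideal_def by (simp add: ideal_gen_base homogeneous_hom_component)
  then show ?thesis
    by (subst sum_hom_components) (auto simp: vanishing_ideal_def intro: ideal_gen_sum)
qed

lemma mvar_power: "(mvar v :: 'a::comm_ring_1 mpoly3) ^ n = Poly_Mapping.single (Poly_Mapping.single v n) 1"
  by (induction n) (simp_all add: mult_single single_add[symmetric] One_nat_def)

lemma single_monomial_eq_prod_mvar:
  "(Poly_Mapping.single \<mu> 1 :: 'a::comm_ring_1 mpoly3) =
    mvar VX ^ Poly_Mapping.lookup \<mu> VX * mvar VY ^ Poly_Mapping.lookup \<mu> VY * mvar VZ ^ Poly_Mapping.lookup \<mu> VZ"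
proof -
  have "\<mu> = Poly_Mapping.single VX (Poly_Mapping.lookup \<mu> VX) + Poly_Mapping.single VY (Poly_Mapping.lookup \<mu> VY)
          + Poly_Mapping.single VZ (Poly_Mapping.lookup \<mu> VZ)"
    by (rule poly_mapping_eqI, case_tac k) (simp_all add: lookup_add lookup_single when_def)
  then show ?thesis
    by (simp add: mvar_power mult_single)
qed

lemma mult_diff_in_ideal_gen:
  assumes "a - b \<in> ideal_gen T" "c - d \<in> ideal_gen T"
  shows "a * c - b * d \<in> ideal_gen T"
proof -
  have "a * c - b * d = a * (c - d) + (a - b) * d" by (simp add: algebra_simps)
  then show ?thesis using assms by (simp add: ideal_gen_add ideal_gen_mult_left ideal_gen_mult_right)
qed

lemma power_diff_in_ideal_gen: "a - b \<in> ideal_gen T \<Longrightarrow> a ^ n - b ^ n \<in> ideal_gen T"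
  by (induction n) (simp_all add: mult_diff_in_ideal_gen)

lemma monomial_cong_point:
  fixes P :: "'a::comm_ring_1 pt3"
  assumes point_forms: "\<And>w. mconst (P v) * mvar w - mconst (P w) * mvar v \<in> ideal_gen T"
    and "mdeg \<mu> = d"
  shows "mconst (P v ^ d) * Poly_Mapping.single \<mu> 1 - mconst (mon_eval P \<mu>) * mvar v ^ d \<in> ideal_gen T"
proof -
  define a where "a w = mconst (P v) * mvar w" for w
  define b where "b w = mconst (P w) * (mvar v :: 'a mpoly3)" for w
  let ?x = "Poly_Mapping.lookup \<mu> VX" and ?y = "Poly_Mapping.lookup \<mu> VY" and ?z = "Poly_Mapping.lookup \<mu> VZ"
  have d: "d = ?x + ?y + ?z" using \<open>mdeg \<mu> = d\<close> by (simp add: mdeg_def sum_UNIV_var)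
  have "mconst (P v ^ d) * Poly_Mapping.single \<mu> 1 = a VX ^ ?x * a VY ^ ?y * a VZ ^ ?z"
    unfolding d a_def power_mult_distrib single_monomial_eq_prod_mvar[of \<mu>] power_add
    by (simp only: mconst_power mconst_mult[symmetric] mult_ac)
  moreover have "mconst (mon_eval P \<mu>) * mvar v ^ d = b VX ^ ?x * b VY ^ ?y * b VZ ^ ?z"
    unfolding d b_def power_mult_distrib power_add mon_eval_def prod_UNIV_var
    by (simp only: mconst_power mconst_mult[symmetric] mult_ac)
  moreover have "a w - b w \<in> ideal_gen T" for w
    using point_forms by (simp add: a_def b_def)
  ultimately show ?thesis by (simp add: mult_diff_in_ideal_gen power_diff_in_ideal_gen)
qed

text \<open>Modulo \<open>T\<close> every variable \<open>x\<^sub>w\<close> is congruent to \<open>(P\<^sub>w / P\<^sub>v) x\<^sub>v\<close>, so a form \<open>g\<close> of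
  degree \<open>d\<close> is congruent to \<open>g(P) / P\<^sub>v\<^sup>d \<cdot> x\<^sub>v\<^sup>d\<close>.\<close>
lemma homogeneous_in_ideal_gen_if_vanishing_at:
  fixes g :: "'a::field mpoly3"
  assumes point_forms: "\<And>w. mconst (P v) * mvar w - mconst (P w) * mvar v \<in> ideal_gen T"
    and "P v \<noteq> 0" and hom: "\<forall>\<mu>\<in>Poly_Mapping.keys g. mdeg \<mu> = d" and "eval3 g P = 0"
  shows "g \<in> ideal_gen T"
proof -
  have g: "g = (\<Sum>\<mu>\<in>Poly_Mapping.keys g. mconst (Poly_Mapping.lookup g \<mu>) * Poly_Mapping.single \<mu> 1)"
    by (subst sum_single_lookup) (simp add: mconst_mult_single)
  have "mconst (P v ^ d) * g - mconst (eval3 g P) * mvar v ^ d =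
     (\<Sum>\<mu>\<in>Poly_Mapping.keys g. mconst (Poly_Mapping.lookup g \<mu>) *
        (mconst (P v ^ d) * Poly_Mapping.single \<mu> 1 - mconst (mon_eval P \<mu>) * mvar v ^ d))"
    by (subst (1) g) (simp add: eval3_eq_eval_map eval_map_def mconst_sum sum_distrib_left
        sum_distrib_right sum_subtractf[symmetric] mconst_mult[symmetric] algebra_simps)
  also have "\<dots> \<in> ideal_gen T"
    using hom by (intro ideal_gen_sum ideal_gen_mult_left monomial_cong_point[OF point_forms]) auto
  finally have "mconst (inverse (P v ^ d)) * (mconst (P v ^ d) * g) \<in> ideal_gen T"
    using \<open>eval3 g P = 0\<close> by (simp add: ideal_gen_mult_left)
  then show ?thesis using \<open>P v \<noteq> 0\<close> by (simp add: mult.assoc[symmetric] mconst_mult)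
qed

lemma lin_form_point_form:
  "lin_form (\<lambda>u. (if u = w then P v else 0) - (if u = v then P w else 0)) =
     mconst (P v) * mvar w - mconst (P w) * (mvar v :: 'a::comm_ring_1 mpoly3)"
  by (cases v; cases w) (simp_all add: lin_form_def sum_UNIV_var mconst_mult_single single_diff single_uminus)

lemma dot_point_form: "dot (\<lambda>u. (if u = w then P v else 0) - (if u = v then P w else 0)) P = 0"
  by (cases v; cases w) (simp_all add: dot3 algebra_simps)

lemma sum_size_filter_mset:
  assumes "finite X"
  shows "(\<Sum>x\<in>X. size (filter_mset (\<lambda>l. R l x) M)) = (\<Sum>l\<in>#M. card {x\<in>X. R l x})"
proof (induction M)
  case (add l M)
  have "size (filter_mset (\<lambda>l'. R l' x) (add_mset l M)) = of_bool (R l x) + size (filter_mset (\<lambda>l'. R l' x) M)" for x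
    by simp
  then show ?case using add assms by (simp add: sum.distrib Int_def)
qed simp

lemma size_filter_mset_add_complement:
  "size (filter_mset p M) + size (filter_mset (\<lambda>x. \<not> p x) M) = size M"
  by (induction M) auto

lemma exists_mem_if_size_gt:
  assumes "M \<subseteq># N" "size (filter_mset (\<lambda>x. \<not> p x) N) < size M"
  shows "\<exists>x\<in>#M. p x"
proof (rule ccontr)
  assume "\<not> (\<exists>x\<in>#M. p x)"
  then have "M \<subseteq># filter_mset (\<lambda>x. \<not> p x) N"
    using filter_mset_mono_strong[OF assms(1), of "\<lambda>_. True"] by simp
  then show False using size_mset_mono assms(2) by fastforce
qed

section \<open>The lines spanned by a planar point configuration\<close>

locale connecting_lines =
  fixes X :: "'a::field pt3 set" and m :: nat and \<Lambda> :: "'a mpoly3 multiset"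
  assumes finX: "finite X" and cardX: "card X = m"
    and nonzero: "\<forall>P\<in>X. (\<exists>v. P v \<noteq> 0)"
    and distinct: "\<forall>P\<in>X. \<forall>Q\<in>X. proj_eq P Q \<longrightarrow> P = Q"
    and not_collinear: "\<not> (\<exists>l. linear_form l \<and> (\<forall>P\<in>X. eval3 l P = 0))"
    and \<Lambda>_lines: "\<forall>l\<in>#\<Lambda>. linear_form l \<and> card {P\<in>X. eval3 l P = 0} \<ge> 2"
    and \<Lambda>_same: "\<forall>l\<in>#\<Lambda>. \<forall>l'\<in>#\<Lambda>. same_line l l' \<longrightarrow> l = l'"
    and \<Lambda>_mult: "\<forall>l. linear_form l \<and> card {P\<in>X. eval3 l P = 0} \<ge> 2 \<longrightarrow>
          size (filter_mset (same_line l) \<Lambda>) = card {P\<in>X. eval3 l P = 0} - 1"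
begin

definition points_on :: "'a mpoly3 \<Rightarrow> 'a pt3 set" where
  "points_on l = {P\<in>X. eval3 l P = 0}"

lemma points_on_subset: "points_on l \<subseteq> X"
  by (auto simp: points_on_def)

lemma finite_points_on: "finite (points_on l)"
  using finX points_on_subset finite_subset by blast

lemma point_nonzero: "P \<in> X \<Longrightarrow> P \<noteq> (\<lambda>_. 0)"
  using nonzero by auto

lemma linear_form_member: "l \<in># \<Lambda> \<Longrightarrow> linear_form l"
  using \<Lambda>_lines by blast

lemma card_points_on_member: "l \<in># \<Lambda> \<Longrightarrow> 2 \<le> card (points_on l)"
  using \<Lambda>_lines by (auto simp: points_on_def)

lemma card_points_on_less: "l \<in># \<Lambda> \<Longrightarrow> card (points_on l) < m"
proof -
  assume "l \<in># \<Lambda>"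
  then have "points_on l \<noteq> X"
    using not_collinear linear_form_member by (auto simp: points_on_def)
  then show ?thesis
    using psubset_card_mono[OF finX] points_on_subset cardX by blast
qed

lemma count_member: "l \<in># \<Lambda> \<Longrightarrow> count \<Lambda> l = card (points_on l) - 1"
proof -
  assume l: "l \<in># \<Lambda>"
  have "filter_mset (same_line l) \<Lambda> = filter_mset (\<lambda>x. x = l) \<Lambda>"
    by (rule filter_mset_cong) (use l \<Lambda>_same same_line_refl in auto)
  then have "size (filter_mset (same_line l) \<Lambda>) = count \<Lambda> l"
    by (simp add: filter_eq_replicate_mset)
  then show ?thesis using \<Lambda>_mult \<Lambda>_lines l unfolding points_on_def by auto
qed

lemma member_unique_through_two_points:
  assumes "l1 \<in># \<Lambda>" "l2 \<in># \<Lambda>" "cross P Q \<noteq> (\<lambda>_. 0)"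
    and "eval3 l1 P = 0" "eval3 l1 Q = 0" "eval3 l2 P = 0" "eval3 l2 Q = 0"
  shows "l1 = l2"
proof -
  have lin: "linear_form l1" "linear_form l2" using assms(1,2) linear_form_member by auto
  have "dot (lin_coeffs l1) P = 0" "dot (lin_coeffs l1) Q = 0"
    "dot (lin_coeffs l2) P = 0" "dot (lin_coeffs l2) Q = 0"
    using assms(4-7) by (simp_all add: eval3_linear_form lin)
  then obtain k where k: "\<forall>v. lin_coeffs l2 v = k * lin_coeffs l1 v"
    using orthogonal_to_two_points_proportional[OF assms(3) lin_coeffs_nonzero[OF lin(1)]] by blast
  then have "k \<noteq> 0" using lin_coeffs_nonzero[OF lin(2)] by auto
  then have "same_line l1 l2" using same_line_iff_proportional_coeffs lin k by blast
  then show ?thesis using \<Lambda>_same assms(1,2) by blast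
qed

lemma proj_eq_if_two_members_vanish:
  assumes "l1 \<in># \<Lambda>" "l2 \<in># \<Lambda>" "l1 \<noteq> l2" "R \<noteq> (\<lambda>_. 0)" "Q \<noteq> (\<lambda>_. 0)"
    and "eval3 l1 R = 0" "eval3 l1 Q = 0" "eval3 l2 R = 0" "eval3 l2 Q = 0"
  shows "proj_eq R Q"
  using member_unique_through_two_points[OF assms(1,2) _ assms(6-9)] assms(3-5) proj_eq_if_cross_eq_0
  by blast

lemma member_through_two_points:
  assumes "P \<in> X" "Q \<in> X" "P \<noteq> Q"
  shows "\<exists>l\<in>#\<Lambda>. eval3 l P = 0 \<and> eval3 l Q = 0"
proof -
  let ?l = "lin_form (cross P Q)"
  have "cross P Q \<noteq> (\<lambda>_. 0)"
    using proj_eq_if_cross_eq_0 point_nonzero distinct assms by blast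
  then have lin: "linear_form ?l" by (rule linear_form_lin_form)
  have vanish: "eval3 ?l P = 0" "eval3 ?l Q = 0"
    by (simp_all add: eval3_lin_form dot_commute[of _ P] dot_commute[of _ Q] dot_cross_left dot_cross_right)
  then have "{P, Q} \<subseteq> {R\<in>X. eval3 ?l R = 0}" using assms by auto
  then have "2 \<le> card {R\<in>X. eval3 ?l R = 0}"
    using card_mono[OF _ \<open>{P, Q} \<subseteq> _\<close>] finX assms(3) by fastforce
  then have "size (filter_mset (same_line ?l) \<Lambda>) \<noteq> 0" using \<Lambda>_mult lin by auto
  then obtain l where "l \<in># filter_mset (same_line ?l) \<Lambda>"
    by (metis multiset_nonemptyE size_empty)
  then have "l \<in># \<Lambda>" "same_line ?l l" by auto
  then obtain c where "l = Poly_Mapping.map (\<lambda>a. c * a) ?l"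
    unfolding same_line_def by blast
  then have "eval3 l P = 0" "eval3 l Q = 0" using vanish by (simp_all add: eval3_map_mult)
  then show ?thesis using \<open>l \<in># \<Lambda>\<close> by blast
qed

lemma size_members_through:
  "size (filter_mset (\<lambda>l. eval3 l Q = 0) \<Lambda>) = (\<Sum>l\<in>{l\<in>set_mset \<Lambda>. eval3 l Q = 0}. card (points_on l) - 1)"
  by (simp add: size_multiset_overloaded_eq count_member)

text \<open>The lines through \<open>P\<close> partition \<open>X - {P}\<close>.\<close>
lemma size_members_through_point:
  assumes "P \<in> X"
  shows "size (filter_mset (\<lambda>l. eval3 l P = 0) \<Lambda>) = m - 1"
proof -
  let ?L = "{l\<in>set_mset \<Lambda>. eval3 l P = 0}"
  have "(\<Sum>l\<in>?L. card (points_on l) - 1) = (\<Sum>l\<in>?L. card (points_on l - {P}))"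
    using assms finite_points_on by (intro sum.cong) (auto simp: points_on_def)
  also have "\<dots> = card (\<Union>l\<in>?L. points_on l - {P})"
  proof (rule card_UN_disjoint[symmetric])
    show "\<forall>i\<in>?L. \<forall>j\<in>?L. i \<noteq> j \<longrightarrow> (points_on i - {P}) \<inter> (points_on j - {P}) = {}"
    proof (intro ballI impI equals0I)
      fix i j R
      assume ij: "i \<in> ?L" "j \<in> ?L" "i \<noteq> j" and R: "R \<in> (points_on i - {P}) \<inter> (points_on j - {P})"
      then have "proj_eq R P"
        using proj_eq_if_two_members_vanish[of i j R P] point_nonzero assms by (auto simp: points_on_def)
      then show False using distinct assms R by (auto simp: points_on_def)
    qed
  qed (simp_all add: finite_points_on)
  also have "(\<Union>l\<in>?L. points_on l - {P}) = X - {P}"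
  proof
    show "X - {P} \<subseteq> (\<Union>l\<in>?L. points_on l - {P})"
      using member_through_two_points[OF assms] by (auto simp: points_on_def)
  qed (use points_on_subset in auto)
  finally show ?thesis using assms finX cardX by (simp add: size_members_through)
qed

text \<open>The lines through \<open>Q \<notin> X\<close> cut out pairwise disjoint subsets of \<open>X\<close>.\<close>
lemma size_members_through_other_point:
  assumes Q: "Q \<noteq> (\<lambda>_. 0)" "\<forall>P\<in>X. \<not> proj_eq P Q"
    and l12: "l1 \<in># \<Lambda>" "l2 \<in># \<Lambda>" "\<not> same_line l1 l2" "eval3 l1 Q = 0" "eval3 l2 Q = 0"
  shows "size (filter_mset (\<lambda>l. eval3 l Q = 0) \<Lambda>) \<le> m - 2"
proof -
  let ?L = "{l\<in>set_mset \<Lambda>. eval3 l Q = 0}"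
  have "l1 \<noteq> l2" using l12(3) same_line_refl by blast
  then have "card {l1, l2} \<le> card ?L" using l12 by (intro card_mono) auto
  then have two: "2 \<le> card ?L" using \<open>l1 \<noteq> l2\<close> by simp
  have "(\<Sum>l\<in>?L. card (points_on l) - 1) + card ?L = (\<Sum>l\<in>?L. card (points_on l) - 1 + 1)"
    by (simp add: sum.distrib)
  also have "\<dots> = (\<Sum>l\<in>?L. card (points_on l))"
    using card_points_on_member by (intro sum.cong) fastforce+
  also have "\<dots> = card (\<Union>l\<in>?L. points_on l)"
  proof (rule card_UN_disjoint[symmetric])
    show "\<forall>i\<in>?L. \<forall>j\<in>?L. i \<noteq> j \<longrightarrow> points_on i \<inter> points_on j = {}"
    proof (intro ballI impI equals0I)
      fix i j R assume "i \<in> ?L" "j \<in> ?L" "i \<noteq> j" "R \<in> points_on i \<inter> points_on j"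
      then show False
        using proj_eq_if_two_members_vanish[of i j R Q] point_nonzero Q by (auto simp: points_on_def)
    qed
  qed (simp_all add: finite_points_on)
  also have "\<dots> \<le> m"
    using card_mono[OF finX, of "\<Union>l\<in>?L. points_on l"] points_on_subset cardX by blast
  finally show ?thesis using two by (simp add: size_members_through)
qed

lemma card_ge_2: "2 \<le> m"
proof (rule ccontr)
  assume "\<not> 2 \<le> m"
  then have "card X \<le> Suc 0" using cardX by simp
  then obtain P where "X \<subseteq> {P}" using card_le_Suc0_iff_eq[OF finX] by blast
  moreover obtain c where "c \<noteq> (\<lambda>_. 0)" "dot c P = 0"
    using exists_orthogonal_nonzero by blast
  ultimately have "linear_form (lin_form c)" "\<forall>Q\<in>X. eval3 (lin_form c) Q = 0"
    by (auto simp: linear_form_lin_form eval3_lin_form)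
  then show False using not_collinear by blast
qed

lemma X_nonempty: "X \<noteq> {}"
  using card_ge_2 cardX by auto

lemma size_ge: "m - 1 \<le> size \<Lambda>"
proof -
  obtain P where "P \<in> X" using X_nonempty by blast
  then show ?thesis
    using size_members_through_point[of P] size_filter_mset_lesseq[of "\<lambda>l. eval3 l P = 0" \<Lambda>] by simp
qed

text \<open>Double counting of incidences: each point lies on \<open>m - 1\<close> members, each member on at
  least two points.\<close>
lemma size_le_choose_two: "size \<Lambda> \<le> m choose 2"
proof -
  have "m * (m - 1) = (\<Sum>P\<in>X. size (filter_mset (\<lambda>l. eval3 l P = 0) \<Lambda>))"
    using cardX size_members_through_point by simp
  also have "\<dots> = (\<Sum>l\<in>#\<Lambda>. card (points_on l))"
    unfolding points_on_def by (rule sum_size_filter_mset[OF finX])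
  also have "\<dots> \<ge> (\<Sum>l\<in>#\<Lambda>. 2)"
    using card_points_on_member by (intro sum_mset_mono) auto
  finally have "2 * size \<Lambda> \<le> m * (m - 1)" by (simp add: sum_mset_constant)
  then show ?thesis by (simp add: choose_two)
qed

lemma nonproportional_pair:
  assumes "S \<subseteq># \<Lambda>" "m - 1 \<le> size S"
  shows "\<exists>l1\<in>#S. \<exists>l2\<in>#S. \<not> same_line l1 l2"
proof (rule ccontr)
  assume none: "\<not> ?thesis"
  have "S \<noteq> {#}" using assms(2) card_ge_2 by auto
  then obtain l where "l \<in># S" by blast
  then have "set_mset S = {l}" using none \<Lambda>_same mset_subset_eqD[OF assms(1)] by blast
  then have "size S = count S l" by (simp add: size_multiset_overloaded_eq)
  also have "\<dots> \<le> count \<Lambda> l" using assms(1) by (simp add: mset_subset_eq_count)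
  also have "\<dots> = card (points_on l) - 1"
    using count_member mset_subset_eqD[OF assms(1) \<open>l \<in># S\<close>] by blast
  finally have "size S \<le> card (points_on l) - 1" .
  moreover have "card (points_on l) < m"
    using card_points_on_less mset_subset_eqD[OF assms(1) \<open>l \<in># S\<close>] by blast
  ultimately show False using assms(2) card_ge_2 by arith
qed

text \<open>An ideal containing \<open>m - 1\<close> members of \<open>\<Lambda>\<close> contains two non-proportional ones. Either a
  third member misses their intersection point, and then the ideal contains all linear forms; or
  all of them pass through it, and then by the bound through points outside \<open>X\<close> that point lies
  in \<open>X\<close> and the ideal contains all linear forms vanishing there.\<close>
lemma linear_forms_at_some_point_in_ideal_gen:
  assumes "S \<subseteq># \<Lambda>" "m - 1 \<le> size S" "\<forall>l\<in>#S. l \<in> ideal_gen T"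
  shows "\<exists>P\<in>X. \<forall>e. dot e P = 0 \<longrightarrow> lin_form e \<in> ideal_gen T"
proof -
  obtain l1 l2 where l12: "l1 \<in># S" "l2 \<in># S" "\<not> same_line l1 l2"
    using nonproportional_pair[OF assms(1,2)] by blast
  then have mem: "l1 \<in># \<Lambda>" "l2 \<in># \<Lambda>" and lin: "linear_form l1" "linear_form l2"
    using mset_subset_eqD[OF assms(1)] linear_form_member by auto
  let ?a = "lin_coeffs l1" and ?b = "lin_coeffs l2"
  let ?n = "cross ?a ?b"
  have n: "?n \<noteq> (\<lambda>_. 0)" by (rule cross_lin_coeffs_nonzero[OF lin l12(3)])
  have span2: "lin_form (\<lambda>v. \<alpha> * ?a v + \<beta> * ?b v) \<in> ideal_gen T" for \<alpha> \<beta>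
    using assms(3) l12 by (simp add: lin_form_add lin_form_scale lin_form_lin_coeffs lin
        ideal_gen_add ideal_gen_mult_left)
  show ?thesis
  proof (cases "\<forall>l\<in>#S. eval3 l ?n = 0")
    case True
    then have "size S \<le> size (filter_mset (\<lambda>l. eval3 l ?n = 0) \<Lambda>)"
      using filter_mset_mono_strong[OF assms(1), of "\<lambda>_. True"] by (simp add: size_mset_mono)
    then have many: "m - 1 \<le> size (filter_mset (\<lambda>l. eval3 l ?n = 0) \<Lambda>)" using assms(2) by linarith
    have "eval3 l1 ?n = 0" "eval3 l2 ?n = 0"
      using lin by (simp_all add: eval3_linear_form dot_cross_left dot_cross_right)
    have "\<not> (\<forall>P\<in>X. \<not> proj_eq P ?n)"
    proof
      assume "\<forall>P\<in>X. \<not> proj_eq P ?n"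
      then have "size (filter_mset (\<lambda>l. eval3 l ?n = 0) \<Lambda>) \<le> m - 2"
        using size_members_through_other_point[OF n _ mem l12(3)] \<open>eval3 l1 ?n = 0\<close> \<open>eval3 l2 ?n = 0\<close>
        by blast
      then show False using many card_ge_2 by arith
    qed
    then obtain P c where P: "P \<in> X" "\<forall>v. ?n v = c * P v"
      unfolding proj_eq_def by blast
    have "lin_form e \<in> ideal_gen T" if "dot e P = 0" for e
    proof -
      have "dot e ?n = 0" using P(2) that dot_scale_right[of e c P] by (simp add: fun_eq_iff[symmetric])
      then obtain \<alpha> \<beta> where "e = (\<lambda>v. \<alpha> * ?a v + \<beta> * ?b v)"
        using orthogonal_to_cross_in_span[OF n] by blast
      then show ?thesis using span2 by simp
    qed
    then show ?thesis using P(1) by blast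
  next
    case False
    then obtain l3 where l3: "l3 \<in># S" "eval3 l3 ?n \<noteq> 0" by blast
    then have lin3: "linear_form l3" using mset_subset_eqD[OF assms(1)] linear_form_member by blast
    have det: "dot (lin_coeffs l3) ?n \<noteq> 0" using l3(2) eval3_linear_form[OF lin3] by simp
    have "lin_form e \<in> ideal_gen T" for e
    proof -
      obtain \<alpha> \<beta> \<gamma> where "e = (\<lambda>v. \<alpha> * ?a v + \<beta> * ?b v + \<gamma> * lin_coeffs l3 v)"
        using in_span_if_det_nonzero[OF det] by blast
      then show ?thesis using span2 assms(3) l3(1) lin3
        by (simp add: lin_form_add lin_form_scale lin_form_lin_coeffs ideal_gen_add ideal_gen_mult_left)
    qed
    then show ?thesis using X_nonempty by blast
  qed
qed

lemma homogeneous_vanishing_in_ideal_gen: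
  assumes "homogeneous g" "\<forall>P\<in>X. eval3 g P = 0"
    and "size (filter_mset (\<lambda>l. l \<notin> ideal_gen T) \<Lambda>) < size \<Lambda> - (m - 1) + 1"
  shows "g \<in> ideal_gen T"
proof -
  let ?S = "filter_mset (\<lambda>l. l \<in> ideal_gen T) \<Lambda>"
  have "m - 1 \<le> size ?S"
    using assms(3) size_ge size_filter_mset_add_complement[of "\<lambda>l. l \<in> ideal_gen T" \<Lambda>] by arith
  then obtain P where P: "P \<in> X" "\<forall>e. dot e P = 0 \<longrightarrow> lin_form e \<in> ideal_gen T"
    using linear_forms_at_some_point_in_ideal_gen[of ?S] by auto
  obtain v where "P v \<noteq> 0" using nonzero P(1) by blast
  obtain d where "\<forall>\<mu>\<in>Poly_Mapping.keys g. mdeg \<mu> = d" using assms(1) unfolding homogeneous_def by blast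
  moreover have "mconst (P v) * mvar w - mconst (P w) * mvar v \<in> ideal_gen T" for w
    using P(2)[rule_format, OF dot_point_form[of w P v]] lin_form_point_form[of w P v] by simp
  ultimately show ?thesis
    using homogeneous_in_ideal_gen_if_vanishing_at \<open>P v \<noteq> 0\<close> assms(2) P(1) by blast
qed

lemma vanishing_ideal_subset_radical: "vanishing_ideal X \<subseteq> radical (I_a (size \<Lambda> - (m - 1) + 1) \<Lambda>)"
  unfolding vanishing_ideal_def I_a_eq_ideal_gen_products
proof (rule ideal_gen_subset_radical, safe)
  fix g :: "'a mpoly3" assume "homogeneous g" "\<forall>P\<in>X. eval3 g P = 0"
  then have "g \<in> radical (ideal_gen (products (size \<Lambda> - (m - 1) + 1) \<Lambda> \<union> {}))"
    by (intro in_radical_products_if_in_covering_ideals homogeneous_vanishing_in_ideal_gen)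
  then show "g \<in> radical (ideal_gen (products (size \<Lambda> - (m - 1) + 1) \<Lambda>))" by simp
qed

text \<open>Only \<open>size \<Lambda> - (m - 1)\<close> members do not vanish at \<open>P \<in> X\<close>, so every product of
  one more of them has a factor vanishing at \<open>P\<close>.\<close>
lemma eval_ray_products_eq_0:
  assumes "P \<in> X" "s \<in> products (size \<Lambda> - (m - 1) + 1) \<Lambda>"
  shows "eval_ray P s = 0"
proof -
  obtain M where M: "s = prod_mset M" "M \<subseteq># \<Lambda>" "size M = size \<Lambda> - (m - 1) + 1"
    using assms(2) unfolding products_def by blast
  have "size (filter_mset (\<lambda>l. eval3 l P \<noteq> 0) \<Lambda>) = size \<Lambda> - (m - 1)"
    using size_filter_mset_add_complement[of "\<lambda>l. eval3 l P = 0" \<Lambda>] size_members_through_point[OF assms(1)]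
    by simp
  then obtain l where "l \<in># M" "eval3 l P = 0"
    using exists_mem_if_size_gt[OF M(2), of "\<lambda>l. eval3 l P = 0"] M(3) by auto
  moreover have "\<forall>\<mu>\<in>Poly_Mapping.keys l. mdeg \<mu> = 1"
    using linear_form_member mset_subset_eqD[OF M(2) \<open>l \<in># M\<close>] unfolding linear_form_def by blast
  ultimately show ?thesis
    using eval_ray_homogeneous_eq_0 by (fastforce simp: M(1) eval_ray_prod_mset)
qed

lemma radical_subset_vanishing_ideal: "radical (I_a (size \<Lambda> - (m - 1) + 1) \<Lambda>) \<subseteq> vanishing_ideal X"
proof
  fix f assume "f \<in> radical (I_a (size \<Lambda> - (m - 1) + 1) \<Lambda>)"
  then obtain k where k: "f ^ k \<in> ideal_gen (products (size \<Lambda> - (m - 1) + 1) \<Lambda>)"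
    unfolding radical_def I_a_eq_ideal_gen_products by blast
  have "eval_ray P f ^ k = 0" if "P \<in> X" for P
    using eval_ray_ideal_gen_eq_0[OF k] eval_ray_products_eq_0[OF that] eval_ray_power by metis
  then show "f \<in> vanishing_ideal X"
    by (intro in_vanishing_ideal_if_eval_ray_eq_0) simp
qed

end

theorem mainTheorem3:
  fixes X :: "'a::field pt3 set" and m :: nat and \<Lambda> :: "'a mpoly3 multiset"
  assumes finX: "finite X" and cardX: "card X = m"
    and nonzero: "\<forall>P\<in>X. (\<exists>v. P v \<noteq> 0)"
    and distinct: "\<forall>P\<in>X. \<forall>Q\<in>X. proj_eq P Q \<longrightarrow> P = Q"
    and not_collinear: "\<not> (\<exists>l. linear_form l \<and> (\<forall>P\<in>X. eval3 l P = 0))"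
    and \<Lambda>_lines: "\<forall>l\<in>#\<Lambda>. linear_form l \<and> card {P\<in>X. eval3 l P = 0} \<ge> 2"
    and \<Lambda>_same: "\<forall>l\<in>#\<Lambda>. \<forall>l'\<in>#\<Lambda>. same_line l l' \<longrightarrow> l = l'"
    and \<Lambda>_mult: "\<forall>l. linear_form l \<and> card {P\<in>X. eval3 l P = 0} \<ge> 2 \<longrightarrow>
          size (filter_mset (same_line l) \<Lambda>) = card {P\<in>X. eval3 l P = 0} - 1"
  shows "size \<Lambda> \<le> m choose 2 \<and>
    radical (I_a (size \<Lambda> - (m - 1) + 1) \<Lambda>) = vanishing_ideal X \<and>
    (\<forall>P\<in>X. size (filter_mset (\<lambda>l. eval3 l P = 0) \<Lambda>) = m - 1) \<and>
    (\<forall>Q. (\<exists>v. Q v \<noteq> 0) \<and> (\<forall>P\<in>X. \<not> proj_eq P Q) \<and>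
           (\<exists>l1\<in>#\<Lambda>. \<exists>l2\<in>#\<Lambda>. \<not> same_line l1 l2 \<and> eval3 l1 Q = 0 \<and> eval3 l2 Q = 0)
           \<longrightarrow> size (filter_mset (\<lambda>l. eval3 l Q = 0) \<Lambda>) \<le> m - 2)"
proof -
  interpret connecting_lines X m \<Lambda>
    by (rule connecting_lines.intro) (fact assms)+
  have "radical (I_a (size \<Lambda> - (m - 1) + 1) \<Lambda>) = vanishing_ideal X"
    using radical_subset_vanishing_ideal vanishing_ideal_subset_radical by (rule subset_antisym)
  moreover have "size (filter_mset (\<lambda>l. eval3 l Q = 0) \<Lambda>) \<le> m - 2"
    if "(\<exists>v. Q v \<noteq> 0) \<and> (\<forall>P\<in>X. \<not> proj_eq P Q) \<and>
        (\<exists>l1\<in>#\<Lambda>. \<exists>l2\<in>#\<Lambda>. \<not> same_line l1 l2 \<and> eval3 l1 Q = 0 \<and> eval3 l2 Q = 0)" for Q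
    using that size_members_through_other_point[of Q] by fastforce
  ultimately show ?thesis
    using size_le_choose_two size_members_through_point by blast
qed

end
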